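(* Let $A,B$ be Hermitian matrices and $H(t)=e^{iAt}Be^{-iAt}$. Let $t_j\in\mathbb{R}$, $h>0$, $t_{j+1}=t_j+h$, and $M$ a positive integer. Then $$\big\|U_2(t_{j+1},t_j)-\tilde U_2(t_{j+1},t_j)\big\|\le\frac{h^2}{M}\|[A,B]\|+\frac{3h^3}{M}\|B\|\,\|[A,B]\|.$$
   Context: $\|\cdot\|$ is the spectral norm. With $\mathcal{A}(t):=-iH(t)$, define $$\Omega_2(t_j+h,t_j):=\int_{t_j}^{t_j+h}\mathcal{A}(s)\,ds-\frac12\int_{t_j}^{t_j+h}\Big[\int_{t_j}^{s}\mathcal{A}(\sigma)\,d\sigma,\;\mathcal{A}(s)\Big]ds,\qquad U_2(t_{j+1},t_j):=e^{\Omega_2(t_j+h,t_j)},$$ and $$\tilde U_2(t_{j+1},t_j):=\exp\Big\{-i\sum_{p=0}^{M-1}H\big(t_j+\tfrac{ph}{M}\big)\frac{h}{M}+\frac12\sum_{p=0}^{M-1}\Big[\sum_{q=1}^{p}H\big(t_j+\tfrac{qh}{M}\big)\frac{h}{M},\;H\big(t_j+\tfrac{ph}{M}\big)\Big]\frac{h}{M}\Big\}.$$ *)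

theory Defs
  imports "HOL-Analysis.Analysis"
begin

type_synonym 'n cmat = "complex^'n^'n"

primrec matpow :: "'n::finite cmat \<Rightarrow> nat \<Rightarrow> 'n cmat" where
  "matpow X 0 = mat 1"
| "matpow X (Suc k) = X ** matpow X k"

definition mexp :: "'n::finite cmat \<Rightarrow> 'n cmat" where
  "mexp X = (\<Sum>k. (1 / fact k) *\<^sub>R matpow X k)"

definition cscale :: "complex \<Rightarrow> 'n::finite cmat \<Rightarrow> 'n cmat" where
  "cscale c X = (\<chi> i j. c * X $ i $ j)"

definition comm :: "'n::finite cmat \<Rightarrow> 'n cmat \<Rightarrow> 'n cmat" where
  "comm X Y = X ** Y - Y ** X"

definition hermitian :: "'n::finite cmat \<Rightarrow> bool" where
  "hermitian X \<longleftrightarrow> (\<forall>i j. X $ i $ j = cnj (X $ j $ i))"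

definition specnorm :: "'n::finite cmat \<Rightarrow> real" where
  "specnorm X = onorm (\<lambda>x. X *v x)"

definition Hfun :: "'n::finite cmat \<Rightarrow> 'n cmat \<Rightarrow> real \<Rightarrow> 'n cmat" where
  "Hfun A B t = mexp (cscale (\<i> * of_real t) A) ** B ** mexp (cscale (- \<i> * of_real t) A)"

definition Afun :: "'n::finite cmat \<Rightarrow> 'n cmat \<Rightarrow> real \<Rightarrow> 'n cmat" where
  "Afun A B t = cscale (- \<i>) (Hfun A B t)"

definition Omega2 :: "'n::finite cmat \<Rightarrow> 'n cmat \<Rightarrow> real \<Rightarrow> real \<Rightarrow> 'n cmat" where
  "Omega2 A B tj h =
     integral {tj..tj+h} (Afun A B)
     - (1/2) *\<^sub>R integral {tj..tj+h}
         (\<lambda>s. comm (integral {tj..s} (Afun A B)) (Afun A B s))"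

definition U2 :: "'n::finite cmat \<Rightarrow> 'n cmat \<Rightarrow> real \<Rightarrow> real \<Rightarrow> 'n cmat" where
  "U2 A B tj h = mexp (Omega2 A B tj h)"

definition U2tilde :: "'n::finite cmat \<Rightarrow> 'n cmat \<Rightarrow> real \<Rightarrow> real \<Rightarrow> nat \<Rightarrow> 'n cmat" where
  "U2tilde A B tj h M = mexp (
      cscale (- \<i>) (\<Sum>p<M. (h / real M) *\<^sub>R Hfun A B (tj + real p * h / real M))
    + (1/2) *\<^sub>R (\<Sum>p<M. (h / real M) *\<^sub>R
          comm (\<Sum>q\<in>{1..p}. (h / real M) *\<^sub>R Hfun A B (tj + real q * h / real M))
               (Hfun A B (tj + real p * h / real M))))"

end

theory Submission
  imports Defs
begin

text \<open>
  In the Banach algebra of complex matrices with the spectral norm, \<open>\<A>(t) = -i H(t)\<close> is the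
  conjugation path \<open>e\<^bsup>ta\<^esup> b e\<^bsup>-ta\<^esup>\<close> with \<open>a = iA\<close> and \<open>b = -iB\<close> skew-Hermitian.
  Skew-Hermitian matrices are closed under sums, real multiples, commutators, integrals and unitary
  conjugation, so both Magnus exponents are skew-Hermitian; their exponentials are unitary, and
  Duhamel's formula gives \<open>\<parallel>e\<^sup>X - e\<^sup>Y\<parallel> \<le> \<parallel>X - Y\<parallel>\<close>. The path is bounded by \<open>\<parallel>B\<parallel>\<close> and, its
  derivative being a conjugate of \<open>[a, b] = [A, B]\<close>, Lipschitz with constant \<open>\<parallel>[A, B]\<parallel>\<close>. With
  step \<open>d = h/M\<close>, the left rule for \<open>\<integral>\<A>\<close> therefore errs by at most \<open>M \<parallel>[A, B]\<parallel> d\<^sup>2\<close>, and on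
  the \<open>p\<close>-th cell the commutator integrand moves by at most \<open>(4p + 2) d\<^sup>2 \<parallel>B\<parallel> \<parallel>[A, B]\<parallel>\<close>, so its
  quadrature errs by at most \<open>2 M\<^sup>2 d\<^sup>3 \<parallel>B\<parallel> \<parallel>[A, B]\<parallel>\<close>. This gives the bound even with 1 in place
  of 3.
\<close>

section \<open>The spectral norm\<close>

lemma norm_matrix_vector_mult_le: "norm (X *v u) \<le> specnorm X * norm u"
  unfolding specnorm_def by (rule onorm[OF matrix_vector_mul_bounded_linear])

lemma specnorm_nonneg: "0 \<le> specnorm X"
  unfolding specnorm_def by (rule onorm_pos_le[OF matrix_vector_mul_bounded_linear])

lemma specnorm_le: "(\<And>u. norm (X *v u) \<le> b * norm u) \<Longrightarrow> specnorm X \<le> b"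
  unfolding specnorm_def by (rule onorm_le)

lemma norm_matrix_entry_le_specnorm:
  fixes X :: "'n::finite cmat"
  shows "cmod (X $ i $ j) \<le> specnorm X"
proof -
  have "axis j 1 \<in> (Basis :: (complex^'n) set)"
    by (auto simp: Basis_vec_def Basis_complex_def)
  then have norm_axis: "norm (axis j (1::complex)) = 1"
    by (rule norm_Basis)
  have "cmod (X $ i $ j) = cmod ((X *v axis j 1) $ i)"
    by (simp add: matrix_vector_mult_def axis_def if_distrib cong: if_cong)
  also have "\<dots> \<le> norm (X *v axis j 1)"
    by (rule Finite_Cartesian_Product.norm_nth_le)
  also have "\<dots> \<le> specnorm X"
    using norm_matrix_vector_mult_le[of X "axis j 1"] norm_axis by simp
  finally show ?thesis .
qed

lemma specnorm_eq_0_iff: "specnorm X = 0 \<longleftrightarrow> X = 0"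
proof
  assume "specnorm X = 0"
  then show "X = 0"
    using norm_matrix_entry_le_specnorm[of X] by (simp add: vec_eq_iff)
next
  assume "X = 0"
  then have "(*v) X = (\<lambda>u. 0)"
    by (simp add: fun_eq_iff vec_eq_iff matrix_vector_mult_def)
  then show "specnorm X = 0"
    by (simp add: specnorm_def onorm_zero)
qed

lemma specnorm_triangle: "specnorm (X + Y) \<le> specnorm X + specnorm Y"
  using onorm_triangle[OF matrix_vector_mul_bounded_linear matrix_vector_mul_bounded_linear, of X Y]
  by (simp add: specnorm_def matrix_vector_mult_add_rdistrib)

lemma matrix_scaleR_vector_mult: "(r *\<^sub>R X) *v u = r *\<^sub>R ((X :: 'n::finite cmat) *v u)"
  by (simp add: vec_eq_iff matrix_vector_mult_def scaleR_sum_right)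

lemma specnorm_scaleR: "specnorm (r *\<^sub>R X) = \<bar>r\<bar> * specnorm X"
  using onorm_scaleR[OF matrix_vector_mul_bounded_linear, of r X]
  by (simp add: specnorm_def matrix_scaleR_vector_mult)

lemma specnorm_mult_le: "specnorm (X ** Y) \<le> specnorm X * specnorm Y"
  using onorm_compose[OF matrix_vector_mul_bounded_linear matrix_vector_mul_bounded_linear, of X Y]
  by (simp add: specnorm_def o_def matrix_vector_mul_assoc)

lemma specnorm_mat_1: "specnorm (mat 1 :: 'n::finite cmat) = 1"
  using onorm_id by (simp add: specnorm_def matrix_vector_mul_lid)

lemma specnorm_cscale_le: "specnorm (cscale c X) \<le> cmod c * specnorm X"
proof (rule specnorm_le)
  fix u
  have "norm (cscale c X *v u) = L2_set (\<lambda>i. cmod c * norm ((X *v u) $ i)) UNIV"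
    by (simp add: norm_vec_def matrix_vector_mult_def cscale_def mult.assoc norm_mult
        flip: sum_distrib_left)
  also have "\<dots> = cmod c * norm (X *v u)"
    by (simp add: L2_set_right_distrib norm_vec_def)
  also have "\<dots> \<le> cmod c * (specnorm X * norm u)"
    by (intro mult_left_mono norm_matrix_vector_mult_le) simp
  finally show "norm (cscale c X *v u) \<le> cmod c * specnorm X * norm u"
    by (simp add: mult.assoc)
qed

lemma norm_vec_le_sum: "norm (x :: 'a::real_normed_vector^'n) \<le> (\<Sum>i\<in>UNIV. norm (x $ i))"
  by (simp add: norm_vec_def L2_set_le_sum)

lemma specnorm_le_norm: "specnorm X \<le> real CARD('n) * real CARD('n) * norm (X :: 'n::finite cmat)"
proof (rule specnorm_le)
  fix u :: "complex^'n"
  have entry: "norm (X $ i $ j * u $ j) \<le> norm X * norm u" for i j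
    unfolding norm_mult
    by (intro mult_mono order_trans[OF Finite_Cartesian_Product.norm_nth_le
          Finite_Cartesian_Product.norm_nth_le] Finite_Cartesian_Product.norm_nth_le) simp_all
  have row: "norm ((X *v u) $ i) \<le> (\<Sum>j\<in>(UNIV::'n set). norm X * norm u)" for i
    unfolding matrix_vector_mult_def vec_lambda_beta
    by (rule order_trans[OF norm_sum], rule sum_mono, rule entry)
  have "norm (X *v u) \<le> (\<Sum>i\<in>(UNIV::'n set). \<Sum>j\<in>(UNIV::'n set). norm X * norm u)"
    by (rule order_trans[OF norm_vec_le_sum], rule sum_mono, rule row)
  then show "norm (X *v u) \<le> real CARD('n) * real CARD('n) * norm X * norm u"
    by simp
qed

lemma norm_le_specnorm: "norm (X :: 'n::finite cmat) \<le> real CARD('n) * real CARD('n) * specnorm X"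
proof -
  have "norm X \<le> (\<Sum>i\<in>(UNIV::'n set). \<Sum>j\<in>(UNIV::'n set). specnorm X)"
    by (intro order_trans[OF norm_vec_le_sum] sum_mono norm_matrix_entry_le_specnorm)
  then show ?thesis
    by simp
qed

section \<open>Matrices as a Banach algebra\<close>

text \<open>A copy of the complex matrices carrying the spectral norm, so that the library's
  exponential, derivatives and integrals in Banach algebras apply.\<close>

typedef ('n::finite) opmat = "UNIV :: 'n cmat set"
  morphisms mat_of to_opmat
  by simp

declare to_opmat_inverse[simplified, simp] mat_of_inverse[simp]

lemma matrix_mult_add_rdistrib: "((X :: 'n::finite cmat) + Y) ** Z = X ** Z + Y ** Z"
  by (vector matrix_matrix_mult_def sum.distrib[symmetric] field_simps)

instantiation opmat :: (finite) real_normed_algebra_1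
begin

definition "0 = to_opmat 0"
definition "1 = to_opmat (mat 1)"
definition "x + y = to_opmat (mat_of x + mat_of y)"
definition "x - y = to_opmat (mat_of x - mat_of y)"
definition "- x = to_opmat (- mat_of x)"
definition "x * y = to_opmat (mat_of x ** mat_of y)"
definition "r *\<^sub>R x = to_opmat (r *\<^sub>R mat_of x)"
definition "norm x = specnorm (mat_of x)"
definition "sgn x = to_opmat (mat_of x /\<^sub>R specnorm (mat_of x))"
definition "dist x y = specnorm (mat_of x - mat_of y)"
definition uniformity_opmat :: "('a opmat \<times> 'a opmat) filter"
  where "uniformity_opmat = (INF e\<in>{0<..}. principal {(x, y). dist x y < e})"
definition open_opmat :: "'a opmat set \<Rightarrow> bool"
  where "open_opmat U \<longleftrightarrow> (\<forall>x\<in>U. \<forall>\<^sub>F (x', y) in uniformity. x' = x \<longrightarrow> y \<in> U)"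

instance
proof
  fix x y z :: "'a opmat" and a b :: real
  show "x + y + z = x + (y + z)" by (simp add: plus_opmat_def add.assoc)
  show "x + y = y + x" by (simp add: plus_opmat_def add.commute)
  show "0 + x = x" by (simp add: plus_opmat_def zero_opmat_def)
  show "- x + x = 0" by (simp add: plus_opmat_def zero_opmat_def uminus_opmat_def)
  show "x - y = x + - y" by (simp add: plus_opmat_def minus_opmat_def uminus_opmat_def)
  show "a *\<^sub>R (x + y) = a *\<^sub>R x + a *\<^sub>R y"
    by (simp add: plus_opmat_def scaleR_opmat_def scaleR_right_distrib)
  show "(a + b) *\<^sub>R x = a *\<^sub>R x + b *\<^sub>R x"
    by (simp add: plus_opmat_def scaleR_opmat_def scaleR_left_distrib)
  show "a *\<^sub>R b *\<^sub>R x = (a * b) *\<^sub>R x" by (simp add: scaleR_opmat_def)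
  show "1 *\<^sub>R x = x" by (simp add: scaleR_opmat_def)
  show "x * y * z = x * (y * z)" by (simp add: times_opmat_def matrix_mul_assoc)
  show "(x + y) * z = x * z + y * z"
    by (simp add: times_opmat_def plus_opmat_def matrix_mult_add_rdistrib)
  show "x * (y + z) = x * y + x * z"
    by (simp add: times_opmat_def plus_opmat_def matrix_add_ldistrib)
  show "1 * x = x" by (simp add: times_opmat_def one_opmat_def)
  show "x * 1 = x" by (simp add: times_opmat_def one_opmat_def)
  show "(0::'a opmat) \<noteq> 1"
  proof
    assume "(0::'a opmat) = 1"
    then have "(0 :: 'a cmat) = mat 1"
      by (simp add: zero_opmat_def one_opmat_def to_opmat_inject)
    then show False
      using specnorm_eq_0_iff[of "mat 1 :: 'a cmat"] specnorm_mat_1[where 'n = 'a] by simp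
  qed
  show "a *\<^sub>R x * y = a *\<^sub>R (x * y)"
    by (simp add: scaleR_opmat_def times_opmat_def scalar_matrix_assoc)
  show "x * a *\<^sub>R y = a *\<^sub>R (x * y)"
    by (simp add: scaleR_opmat_def times_opmat_def matrix_scalar_ac scalar_matrix_assoc)
  show "dist x y = norm (x - y)" by (simp add: dist_opmat_def norm_opmat_def minus_opmat_def)
  show "sgn x = inverse (norm x) *\<^sub>R x" by (simp add: sgn_opmat_def norm_opmat_def scaleR_opmat_def)
  show "(uniformity :: ('a opmat \<times> 'a opmat) filter) =
      (INF e\<in>{0<..}. principal {(x, y). dist x y < e})"
    by (simp add: uniformity_opmat_def)
  show "norm (x + y) \<le> norm x + norm y"
    by (simp add: norm_opmat_def plus_opmat_def specnorm_triangle)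
  show "norm (a *\<^sub>R x) = \<bar>a\<bar> * norm x"
    by (simp add: norm_opmat_def scaleR_opmat_def specnorm_scaleR)
  show "(norm x = 0) = (x = 0)"
    by (simp add: norm_opmat_def specnorm_eq_0_iff zero_opmat_def flip: mat_of_inject)
  show "norm (x * y) \<le> norm x * norm y"
    by (simp add: norm_opmat_def times_opmat_def specnorm_mult_le)
  show "norm (1::'a opmat) = 1"
    by (simp add: norm_opmat_def one_opmat_def specnorm_mat_1)
qed (simp add: open_opmat_def)

end

lemma mat_of_add [simp]: "mat_of (x + y) = mat_of x + mat_of y"
  by (simp add: plus_opmat_def)

lemma mat_of_diff [simp]: "mat_of (x - y) = mat_of x - mat_of y"
  by (simp add: minus_opmat_def)

lemma mat_of_uminus [simp]: "mat_of (- x) = - mat_of x"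
  by (simp add: uminus_opmat_def)

lemma mat_of_scaleR [simp]: "mat_of (r *\<^sub>R x) = r *\<^sub>R mat_of x"
  by (simp add: scaleR_opmat_def)

lemma mat_of_mult [simp]: "mat_of (x * y) = mat_of x ** mat_of y"
  by (simp add: times_opmat_def)

lemma mat_of_0 [simp]: "mat_of 0 = 0"
  by (simp add: zero_opmat_def)

lemma mat_of_1 [simp]: "mat_of 1 = mat 1"
  by (simp add: one_opmat_def)

lemma mat_of_sum [simp]: "mat_of (sum f S) = (\<Sum>x\<in>S. mat_of (f x))"
  by (induction S rule: infinite_finite_induct) simp_all

lemma specnorm_mat_of: "specnorm (mat_of x) = norm x"
  by (simp add: norm_opmat_def)

lemma bounded_linear_mat_of: "bounded_linear (mat_of :: 'n::finite opmat \<Rightarrow> 'n cmat)"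
proof (rule bounded_linear_intro[where K = "real CARD('n) * real CARD('n)"])
  show "norm (mat_of x) \<le> norm x * (real CARD('n) * real CARD('n))" for x :: "'n opmat"
    using norm_le_specnorm[of "mat_of x"] by (simp add: specnorm_mat_of mult.commute)
qed simp_all

lemma bounded_linear_to_opmat: "bounded_linear (to_opmat :: 'n::finite cmat \<Rightarrow> 'n opmat)"
proof (rule bounded_linear_intro[where K = "real CARD('n) * real CARD('n)"])
  show "norm (to_opmat X) \<le> norm X * (real CARD('n) * real CARD('n))" for X :: "'n cmat"
    using specnorm_le_norm[of X] by (simp add: norm_opmat_def mult.commute)
qed (simp_all add: plus_opmat_def scaleR_opmat_def)

instance opmat :: (finite) banach
proof
  fix X :: "nat \<Rightarrow> 'a opmat"
  assume "Cauchy X"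
  then have "Cauchy (\<lambda>n. mat_of (X n))"
    by (rule bounded_linear.Cauchy[OF bounded_linear_mat_of])
  then obtain L where "(\<lambda>n. mat_of (X n)) \<longlonglongrightarrow> L"
    by (auto simp: Cauchy_convergent_iff convergent_def)
  then have "(\<lambda>n. to_opmat (mat_of (X n))) \<longlonglongrightarrow> to_opmat L"
    by (rule bounded_linear.tendsto[OF bounded_linear_to_opmat])
  then show "convergent X"
    by (auto simp: convergent_def)
qed

lemma mexp_mat_of: "mexp (mat_of x) = mat_of (exp x)"
proof -
  have "matpow (mat_of x) k = mat_of (x ^ k)" for k
    by (induction k) simp_all
  then have "mexp (mat_of x) = (\<Sum>k. mat_of (x ^ k /\<^sub>R fact k))"
    by (simp add: mexp_def divide_inverse)
  also have "\<dots> = mat_of (exp x)"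
    unfolding exp_def by (rule bounded_linear.suminf[OF bounded_linear_mat_of summable_exp_generic, symmetric])
  finally show ?thesis .
qed

lemma integral_mat_of:
  "f integrable_on S \<Longrightarrow> integral S (\<lambda>s. mat_of (f s)) = mat_of (integral S f)"
  using integral_linear[OF _ bounded_linear_mat_of] by (simp add: o_def)

section \<open>Exponentials in a Banach algebra\<close>

definition commutator :: "'a::ring \<Rightarrow> 'a \<Rightarrow> 'a" where
  "commutator x y = x * y - y * x"

lemma norm_commutator_le:
  fixes x y :: "'a::real_normed_algebra"
  shows "norm (commutator x y) \<le> 2 * norm x * norm y"
proof -
  have "norm (commutator x y) \<le> norm (x * y) + norm (y * x)"
    unfolding commutator_def by (rule norm_triangle_ineq4)
  also have "\<dots> \<le> norm x * norm y + norm y * norm x"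
    by (intro add_mono norm_mult_ineq)
  finally show ?thesis
    by simp
qed

lemma norm_mult_mult_le_of_contractions:
  fixes u x w :: "'a::real_normed_algebra"
  assumes "norm u \<le> 1" and "norm w \<le> 1"
  shows "norm (u * x * w) \<le> norm x"
proof -
  have "norm (u * x * w) \<le> norm u * norm x * norm w"
    by (meson norm_mult_ineq mult_right_mono norm_ge_zero order_trans)
  also have "\<dots> \<le> 1 * norm x * 1"
    using assms by (intro mult_mono) auto
  finally show ?thesis
    by simp
qed

lemma norm_diff_le_of_vector_derivative_bound:
  fixes f :: "real \<Rightarrow> 'a::real_normed_vector"
  assumes "\<And>t. (f has_vector_derivative f' t) (at t)" and "\<And>t. norm (f' t) \<le> K"
  shows "norm (f s - f t) \<le> K * \<bar>s - t\<bar>"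
proof -
  have "norm (f s - f t) \<le> K * norm (s - t)"
  proof (rule differentiable_bound[where S = UNIV and f' = "\<lambda>t h. h *\<^sub>R f' t"])
    show "(f has_derivative (\<lambda>h. h *\<^sub>R f' t)) (at t within UNIV)" for t
      using assms(1) by (simp add: has_vector_derivative_def)
    show "onorm (\<lambda>h. h *\<^sub>R f' t) \<le> K" for t
      using assms(2)[of t] by (intro onorm_le) (simp add: mult.commute[of K] mult_left_mono)
  qed auto
  then show ?thesis
    by simp
qed

lemma norm_exp_diff_le:
  fixes X Y :: "'a::{real_normed_algebra_1,banach}"
  assumes X: "\<And>s. norm (exp (s *\<^sub>R X)) \<le> 1" and Y: "\<And>s. norm (exp (s *\<^sub>R Y)) \<le> 1"
  shows "norm (exp X - exp Y) \<le> norm (X - Y)"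
proof -
  define k where "k s = exp (s *\<^sub>R X) * exp (s *\<^sub>R (- Y))" for s
  have "(k has_vector_derivative
      exp (s *\<^sub>R X) * (- Y * exp (s *\<^sub>R (- Y))) + exp (s *\<^sub>R X) * X * exp (s *\<^sub>R (- Y))) (at s)" for s
    unfolding k_def
    by (rule has_vector_derivative_mult[OF exp_scaleR_has_vector_derivative_right
          exp_scaleR_has_vector_derivative_left])
  then have "(k has_vector_derivative exp (s *\<^sub>R X) * (X - Y) * exp (s *\<^sub>R (- Y))) (at s)" for s
    by (simp add: algebra_simps)
  moreover have "norm (exp (s *\<^sub>R X) * (X - Y) * exp (s *\<^sub>R (- Y))) \<le> norm (X - Y)" for s
    using X[of s] Y[of "- s"] by (intro norm_mult_mult_le_of_contractions) simp_all
  ultimately have "norm (k 1 - k 0) \<le> norm (X - Y) * \<bar>1 - 0\<bar>"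
    by (rule norm_diff_le_of_vector_derivative_bound)
  moreover have "exp X - exp Y = (k 1 - k 0) * exp Y"
    using exp_minus_inverse[of "- Y"] by (simp add: k_def algebra_simps)
  ultimately have "norm (exp X - exp Y) \<le> norm (X - Y) * norm (exp Y)"
    by (metis norm_mult_ineq mult_right_mono norm_ge_zero order_trans abs_one diff_0_right mult_1_right)
  also have "\<dots> \<le> norm (X - Y)"
    using Y[of 1] by (simp add: mult_left_le)
  finally show ?thesis .
qed

definition conj_path :: "'a::{real_normed_algebra_1,banach} \<Rightarrow> 'a \<Rightarrow> real \<Rightarrow> 'a" where
  "conj_path a b t = exp (t *\<^sub>R a) * b * exp (t *\<^sub>R (- a))"

lemma conj_path_has_vector_derivative:
  "(conj_path a b has_vector_derivative conj_path a (commutator a b) t) (at t)"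
proof -
  have "((\<lambda>t. exp (t *\<^sub>R a) * b * exp (t *\<^sub>R (- a))) has_vector_derivative
      exp (t *\<^sub>R a) * b * (- a * exp (t *\<^sub>R (- a))) + exp (t *\<^sub>R a) * a * b * exp (t *\<^sub>R (- a))) (at t)"
    by (rule has_vector_derivative_mult[OF has_vector_derivative_mult_left[OF
          exp_scaleR_has_vector_derivative_right] exp_scaleR_has_vector_derivative_left])
  then show ?thesis
    by (simp add: conj_path_def[abs_def] commutator_def algebra_simps)
qed

lemma norm_conj_path_le:
  assumes "\<And>s. norm (exp (s *\<^sub>R a)) \<le> 1"
  shows "norm (conj_path a b t) \<le> norm b"
  unfolding conj_path_def
  using assms[of t] assms[of "- t"] by (intro norm_mult_mult_le_of_contractions) simp_all

lemma norm_conj_path_diff_le: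
  assumes "\<And>s. norm (exp (s *\<^sub>R a)) \<le> 1"
  shows "norm (conj_path a b s - conj_path a b t) \<le> norm (commutator a b) * \<bar>s - t\<bar>"
  using conj_path_has_vector_derivative norm_conj_path_le[OF assms]
  by (rule norm_diff_le_of_vector_derivative_bound)

lemma continuous_on_conj_path: "continuous_on S (conj_path a b)"
  by (rule continuous_on_vector_derivative)
    (rule has_vector_derivative_at_within[OF conj_path_has_vector_derivative])

section \<open>Skew-Hermitian matrices\<close>

text \<open>The inner product of \<open>complex^'n\<close> is the real part of the Hermitian one, so this
  condition says \<open>X\<^sup>* = - X\<close>.\<close>

definition skew_hermitian :: "'n::finite opmat \<Rightarrow> bool" where
  "skew_hermitian x \<longleftrightarrow> (\<forall>v. inner (mat_of x *v v) v = 0)"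

lemma skew_hermitian_imaginary_times_hermitian:
  fixes X :: "'n::finite cmat"
  assumes "Re c = 0" and "hermitian X"
  shows "skew_hermitian (to_opmat (cscale c X))"
  unfolding skew_hermitian_def
proof
  fix v :: "complex^'n"
  define q where "q = (\<Sum>k\<in>UNIV. \<Sum>l\<in>UNIV. X$k$l * v$l * cnj (v$k))"
  have "cnj (X$k$l) = X$l$k" for k l
    using assms(2) unfolding hermitian_def by (metis complex_cnj_cnj)
  then have "cnj q = (\<Sum>k\<in>UNIV. \<Sum>l\<in>UNIV. X$l$k * cnj (v$l) * v$k)"
    by (simp add: q_def)
  also have "\<dots> = q"
    unfolding q_def by (subst sum.swap) (simp add: mult.commute mult.left_commute)
  finally have "Im q = 0"
    by (simp add: complex_eq_iff)
  have inner_eq: "inner z w = Re (z * cnj w)" for z w :: complex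
    by (simp add: inner_complex_def)
  have "inner (cscale c X *v v) v = (\<Sum>k\<in>UNIV. Re ((\<Sum>l\<in>UNIV. c * X$k$l * v$l) * cnj (v$k)))"
    by (simp add: inner_vec_def inner_eq matrix_vector_mult_def cscale_def)
  also have "\<dots> = Re (c * q)"
    by (simp add: q_def sum_distrib_left sum_distrib_right Re_sum mult.assoc)
  finally show "inner (mat_of (to_opmat (cscale c X)) *v v) v = 0"
    using assms(1) \<open>Im q = 0\<close> by simp
qed

lemma skew_hermitian_0: "skew_hermitian 0"
  by (simp add: skew_hermitian_def matrix_vector_mult_def inner_vec_def)

lemma skew_hermitian_add: "skew_hermitian x \<Longrightarrow> skew_hermitian y \<Longrightarrow> skew_hermitian (x + y)"
  by (simp add: skew_hermitian_def matrix_vector_mult_add_rdistrib inner_add_left)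

lemma skew_hermitian_scaleR: "skew_hermitian x \<Longrightarrow> skew_hermitian (r *\<^sub>R x)"
  by (simp add: skew_hermitian_def matrix_scaleR_vector_mult)

lemma skew_hermitian_diff: "skew_hermitian x \<Longrightarrow> skew_hermitian y \<Longrightarrow> skew_hermitian (x - y)"
  using skew_hermitian_add[of x "(- 1) *\<^sub>R y"] skew_hermitian_scaleR[of y "- 1"] by simp

lemma skew_hermitian_sum: "(\<And>i. i \<in> S \<Longrightarrow> skew_hermitian (f i)) \<Longrightarrow> skew_hermitian (sum f S)"
  by (induction S rule: infinite_finite_induct) (simp_all add: skew_hermitian_0 skew_hermitian_add)

lemma skew_hermitian_inner_antisym:
  assumes "skew_hermitian x"
  shows "inner (mat_of x *v u) w = - inner u (mat_of x *v w)"
proof -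
  have "inner (mat_of x *v (u + w)) (u + w) = 0" "inner (mat_of x *v u) u = 0"
    "inner (mat_of x *v w) w = 0"
    using assms by (simp_all add: skew_hermitian_def)
  then show ?thesis
    by (simp add: matrix_vector_right_distrib inner_add_left inner_add_right inner_commute)
qed

lemma skew_hermitian_commutator:
  assumes "skew_hermitian x" and "skew_hermitian y"
  shows "skew_hermitian (commutator x y)"
  unfolding skew_hermitian_def
proof
  fix v
  have "inner (mat_of (commutator x y) *v v) v
      = inner (mat_of x *v (mat_of y *v v)) v - inner (mat_of y *v (mat_of x *v v)) v"
    by (simp add: commutator_def matrix_vector_mult_diff_rdistrib matrix_vector_mul_assoc inner_diff_left)
  also have "\<dots> = 0"
    using skew_hermitian_inner_antisym[OF assms(1), of "mat_of y *v v" v]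
      skew_hermitian_inner_antisym[OF assms(2), of "mat_of x *v v" v]
    by (simp add: inner_commute)
  finally show "inner (mat_of (commutator x y) *v v) v = 0" .
qed

lemma bounded_linear_mat_of_mult_vec: "bounded_linear (\<lambda>x. mat_of x *v v)"
proof (rule bounded_linear_intro[where K = "norm v"])
  show "norm (mat_of x *v v) \<le> norm x * norm v" for x
    using norm_matrix_vector_mult_le[of "mat_of x" v] by (simp add: specnorm_mat_of)
qed (simp_all add: matrix_vector_mult_add_rdistrib matrix_scaleR_vector_mult)

lemma skew_hermitian_integral:
  assumes "\<And>s. s \<in> S \<Longrightarrow> skew_hermitian (f s)"
  shows "skew_hermitian (integral S f)"
proof (cases "f integrable_on S")
  case True
  show ?thesis
    unfolding skew_hermitian_def
  proof
    fix v
    have "inner (mat_of (integral S f) *v v) v = integral S (\<lambda>s. inner (mat_of (f s) *v v) v)"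
      using integral_linear[OF True bounded_linear_compose[OF bounded_linear_inner_left
            bounded_linear_mat_of_mult_vec]]
      by (simp add: o_def)
    also have "\<dots> = integral S (\<lambda>s. 0)"
      using assms by (intro integral_cong) (simp add: skew_hermitian_def)
    finally show "inner (mat_of (integral S f) *v v) v = 0"
      by simp
  qed
next
  case False
  then show ?thesis
    by (simp add: not_integrable_integral skew_hermitian_0)
qed

lemma orthogonal_transformation_exp_skew_hermitian:
  assumes "skew_hermitian x"
  shows "orthogonal_transformation ((*v) (mat_of (exp (t *\<^sub>R x))))"
  unfolding orthogonal_transformation
proof (intro conjI allI)
  fix v
  define u where "u s = mat_of (exp (s *\<^sub>R x)) *v v" for s
  have du: "(u has_vector_derivative mat_of x *v u s) (at s)" for s
    using bounded_linear.has_vector_derivative[OF bounded_linear_mat_of_mult_vec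
        exp_scaleR_has_vector_derivative_left]
    unfolding u_def by (simp add: matrix_vector_mul_assoc)
  have "((\<lambda>s. inner (u s) (u s)) has_vector_derivative
      inner (u s) (mat_of x *v u s) + inner (mat_of x *v u s) (u s)) (at s)" for s
    by (rule bounded_bilinear.has_vector_derivative[OF bounded_bilinear_inner du du])
  moreover have "inner (mat_of x *v u s) (u s) = 0" for s
    using assms by (simp add: skew_hermitian_def)
  ultimately have "((\<lambda>s. inner (u s) (u s)) has_real_derivative 0) (at s)" for s
    by (simp add: has_real_derivative_iff_has_vector_derivative inner_commute)
  then have "inner (u t) (u t) = inner (u 0) (u 0)"
    by (intro DERIV_isconst_all) auto
  then show "norm (mat_of (exp (t *\<^sub>R x)) *v v) = norm v"
    by (simp add: u_def norm_eq_sqrt_inner)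
qed (rule matrix_vector_mul_linear)

lemma norm_exp_skew_hermitian_le:
  assumes "skew_hermitian x"
  shows "norm (exp (t *\<^sub>R x)) \<le> 1"
  using orthogonal_transformation_exp_skew_hermitian[OF assms, of t]
  by (simp add: orthogonal_transformation specnorm_le flip: specnorm_mat_of)

lemma skew_hermitian_conj_path:
  assumes "skew_hermitian a" and "skew_hermitian b"
  shows "skew_hermitian (conj_path a b t)"
  unfolding skew_hermitian_def
proof
  fix v
  define U where "U = mat_of (exp (t *\<^sub>R a))"
  define w where "w = mat_of (exp (t *\<^sub>R (- a))) *v v"
  have v: "v = U *v w"
    using exp_minus_inverse[of "t *\<^sub>R a"]
    by (simp add: U_def w_def matrix_vector_mul_assoc flip: mat_of_mult)
  have "mat_of (conj_path a b t) *v v = U *v (mat_of b *v w)"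
    by (simp add: conj_path_def U_def w_def matrix_vector_mul_assoc matrix_mul_assoc)
  then have "inner (mat_of (conj_path a b t) *v v) v = inner (U *v (mat_of b *v w)) (U *v w)"
    by (simp flip: v)
  also have "\<dots> = inner (mat_of b *v w) w"
    using orthogonal_transformation_exp_skew_hermitian[OF assms(1)]
    by (simp add: U_def orthogonal_transformation_def)
  also have "\<dots> = 0"
    using assms(2) by (simp add: skew_hermitian_def)
  finally show "inner (mat_of (conj_path a b t) *v v) v = 0" .
qed

section \<open>Quadrature errors\<close>

lemma integral_uniform_partition:
  fixes g :: "real \<Rightarrow> 'a::banach"
  assumes "d \<ge> 0" and "continuous_on {a..a + real N * d} g"
  shows "integral {a..a + real N * d} g = (\<Sum>p<N. integral {a + real p * d..a + real p * d + d} g)"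
  using assms(2)
proof (induction N)
  case (Suc N)
  have "integral {a..a + real N * d} g + integral {a + real N * d..a + real (Suc N) * d} g
      = integral {a..a + real (Suc N) * d} g"
    using assms(1) integrable_continuous_interval[OF Suc.prems]
    by (intro Henstock_Kurzweil_Integration.integral_combine) (simp_all add: algebra_simps)
  moreover have "continuous_on {a..a + real N * d} g"
    by (rule continuous_on_subset[OF Suc.prems]) (use assms(1) in \<open>auto simp: algebra_simps\<close>)
  ultimately show ?case
    using Suc.IH by (simp add: algebra_simps)
qed simp

lemma norm_integral_minus_const_le:
  fixes g :: "real \<Rightarrow> 'a::banach"
  assumes "a \<le> b" and "continuous_on {a..b} g" and "\<And>s. s \<in> {a..b} \<Longrightarrow> norm (g s - c) \<le> K"
  shows "norm (integral {a..b} g - (b - a) *\<^sub>R c) \<le> K * (b - a)"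
proof -
  have "integral {a..b} (\<lambda>s. g s - c) = integral {a..b} g - integral {a..b} (\<lambda>s. c)"
    by (rule integral_diff[OF integrable_continuous_interval[OF assms(2)] integrable_const_ivl])
  then have "integral {a..b} (\<lambda>s. g s - c) = integral {a..b} g - (b - a) *\<^sub>R c"
    using assms(1) by simp
  moreover have "norm (integral {a..b} (\<lambda>s. g s - c)) \<le> K * (b - a)"
    using assms by (intro integral_bound continuous_intros) auto
  ultimately show ?thesis
    by simp
qed

lemma norm_integral_minus_riemann_sum_le:
  fixes g :: "real \<Rightarrow> 'a::banach"
  assumes "d \<ge> 0" and "continuous_on {a..a + real N * d} g"
    and "\<And>p s. p < N \<Longrightarrow> s \<in> {a + real p * d..a + real p * d + d} \<Longrightarrow> norm (g s - c p) \<le> K p"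
  shows "norm (integral {a..a + real N * d} g - (\<Sum>p<N. d *\<^sub>R c p)) \<le> (\<Sum>p<N. K p) * d"
proof -
  have cell: "norm (integral {a + real p * d..a + real p * d + d} g - d *\<^sub>R c p) \<le> K p * d"
    if "p < N" for p
  proof -
    have "real p * d + d \<le> real N * d"
      using that assms(1) mult_right_mono[of "real p + 1" "real N" d] by (simp add: algebra_simps)
    then have "{a + real p * d..a + real p * d + d} \<subseteq> {a..a + real N * d}"
      using assms(1) by auto
    then have cont: "continuous_on {a + real p * d..a + real p * d + d} g"
      by (rule continuous_on_subset[OF assms(2)])
    have "norm (integral {a + real p * d..a + real p * d + d} g
        - (a + real p * d + d - (a + real p * d)) *\<^sub>R c p) \<le> K p * (a + real p * d + d - (a + real p * d))"
      by (rule norm_integral_minus_const_le[OF _ cont assms(3)[OF that]]) (use assms(1) in simp)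
    then show ?thesis
      by simp
  qed
  have "norm (integral {a..a + real N * d} g - (\<Sum>p<N. d *\<^sub>R c p))
      = norm (\<Sum>p<N. integral {a + real p * d..a + real p * d + d} g - d *\<^sub>R c p)"
    by (simp add: integral_uniform_partition[OF assms(1,2)] sum_subtractf)
  also have "\<dots> \<le> (\<Sum>p<N. K p * d)"
    using cell by (intro order_trans[OF norm_sum] sum_mono) auto
  finally show ?thesis
    by (simp add: sum_distrib_right)
qed

definition left_riemann_sum :: "(real \<Rightarrow> 'a::real_vector) \<Rightarrow> real \<Rightarrow> real \<Rightarrow> nat \<Rightarrow> 'a" where
  "left_riemann_sum f a d N = (\<Sum>p<N. d *\<^sub>R f (a + real p * d))"

definition right_riemann_sum :: "(real \<Rightarrow> 'a::real_vector) \<Rightarrow> real \<Rightarrow> real \<Rightarrow> nat \<Rightarrow> 'a" where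
  "right_riemann_sum f a d N = (\<Sum>q\<in>{1..N}. d *\<^sub>R f (a + real q * d))"

text \<open>The exponent \<open>\<Omega>\<^sub>2(b, a)\<close> of the second-order Magnus expansion of a path \<open>f\<close>, and its
  discretisation with step \<open>d\<close>, as in \<open>U2tilde\<close>: the outer integrals by the left rule, the
  inner one by the right rule.\<close>

definition magnus2 :: "(real \<Rightarrow> 'a::{real_normed_algebra,banach}) \<Rightarrow> real \<Rightarrow> real \<Rightarrow> 'a" where
  "magnus2 f a b = integral {a..b} f
     - (1/2) *\<^sub>R integral {a..b} (\<lambda>s. commutator (integral {a..s} f) (f s))"

definition magnus2_riemann :: "(real \<Rightarrow> 'a::real_algebra) \<Rightarrow> real \<Rightarrow> real \<Rightarrow> nat \<Rightarrow> 'a" where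
  "magnus2_riemann f a d N = left_riemann_sum f a d N
     - (1/2) *\<^sub>R (\<Sum>p<N. d *\<^sub>R commutator (right_riemann_sum f a d p) (f (a + real p * d)))"

locale lipschitz_path =
  fixes f :: "real \<Rightarrow> 'a::{real_normed_algebra,banach}" and C :: real
  assumes lipschitz: "\<And>s t. norm (f s - f t) \<le> C * \<bar>s - t\<bar>"
begin

lemma lipschitz_constant_nonneg: "C \<ge> 0"
proof -
  have "norm (f 1 - f 0) \<le> C"
    using lipschitz[of 1 0] by simp
  then show ?thesis
    using norm_ge_zero order_trans by blast
qed

lemma continuous: "continuous_on S f"
proof -
  have "C-lipschitz_on UNIV f"
    using lipschitz lipschitz_constant_nonneg by (intro lipschitz_onI) (simp_all add: dist_norm)
  then show ?thesis
    using continuous_on_subset lipschitz_on_continuous_on by blast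
qed

lemma norm_diff_le: "\<bar>s - t\<bar> \<le> \<delta> \<Longrightarrow> norm (f s - f t) \<le> C * \<delta>"
  using lipschitz[of s t] mult_left_mono[OF _ lipschitz_constant_nonneg] by (meson order_trans)

lemma norm_integral_minus_left_riemann_sum_le:
  assumes "d \<ge> 0"
  shows "norm (integral {a..a + real N * d} f - left_riemann_sum f a d N) \<le> real N * C * d\<^sup>2"
proof -
  have "norm (integral {a..a + real N * d} f - left_riemann_sum f a d N) \<le> (\<Sum>p<N. C * d) * d"
    unfolding left_riemann_sum_def
    using assms by (intro norm_integral_minus_riemann_sum_le continuous norm_diff_le) auto
  then show ?thesis
    by (simp add: power2_eq_square mult.assoc)
qed

lemma norm_integral_minus_right_riemann_sum_le:
  assumes "d \<ge> 0"
  shows "norm (integral {a..a + real N * d} f - right_riemann_sum f a d N) \<le> real N * C * d\<^sup>2"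
proof -
  have "right_riemann_sum f a d N = (\<Sum>p<N. d *\<^sub>R f (a + real p * d + d))"
    by (simp add: right_riemann_sum_def sum.atLeast1_atMost_eq algebra_simps)
  moreover have "norm (integral {a..a + real N * d} f - (\<Sum>p<N. d *\<^sub>R f (a + real p * d + d)))
      \<le> (\<Sum>p<N. C * d) * d"
    using assms by (intro norm_integral_minus_riemann_sum_le continuous norm_diff_le) auto
  ultimately show ?thesis
    by (simp add: power2_eq_square mult.assoc)
qed

end

locale bounded_lipschitz_path = lipschitz_path +
  fixes B :: real
  assumes bounded: "\<And>t. norm (f t) \<le> B"
begin

lemma bound_nonneg: "B \<ge> 0"
  using bounded[of 0] norm_ge_zero[of "f 0"] by linarith

lemma norm_right_riemann_sum_le:
  assumes "d \<ge> 0"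
  shows "norm (right_riemann_sum f a d N) \<le> real N * d * B"
proof -
  have "norm (right_riemann_sum f a d N) \<le> (\<Sum>q\<in>{1..N}. d * B)"
    unfolding right_riemann_sum_def
    using assms bounded by (intro order_trans[OF norm_sum] sum_mono) (simp add: mult_left_mono)
  then show ?thesis
    by simp
qed

lemma continuous_on_magnus2_integrand:
  "continuous_on {a..b} (\<lambda>s. commutator (integral {a..s} f) (f s))"
  unfolding commutator_def
  by (intro continuous_intros continuous indefinite_integral_continuous_1
      integrable_continuous_interval)

lemma norm_magnus2_integrand_minus_le:
  assumes "d \<ge> 0" and s: "s \<in> {a + real p * d..a + real p * d + d}"
  shows "norm (commutator (integral {a..s} f) (f s)
      - commutator (right_riemann_sum f a d p) (f (a + real p * d)))
    \<le> (4 * real p + 2) * d\<^sup>2 * B * C"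
proof -
  define c where "c = a + real p * d"
  define R where "R = right_riemann_sum f a d p"
  define D where "D = integral {a..c} f - R"
  define E where "E = integral {c..s} f - (s - c) *\<^sub>R f s"
  have "integral {a..s} f = integral {a..c} f + integral {c..s} f"
    using assms by (intro Henstock_Kurzweil_Integration.integral_combine[symmetric]
        integrable_continuous_interval continuous) (auto simp: c_def)
  then have "commutator (integral {a..s} f) (f s) - commutator R (f c)
      = commutator D (f s) + commutator R (f s - f c) + commutator E (f s)"
    by (simp add: D_def E_def commutator_def algebra_simps)
  also have "norm \<dots> \<le> norm (commutator D (f s)) + norm (commutator R (f s - f c))
      + norm (commutator E (f s))"
    by (rule order_trans[OF norm_triangle_ineq add_right_mono[OF norm_triangle_ineq]])
  also have "\<dots> \<le> 2 * norm D * norm (f s) + 2 * norm R * norm (f s - f c) + 2 * norm E * norm (f s)"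
    by (intro add_mono norm_commutator_le)
  also have "\<dots> \<le> 2 * (real p * C * d\<^sup>2) * B + 2 * (real p * d * B) * (C * d) + 2 * (C * d * d) * B"
  proof -
    have "norm D \<le> real p * C * d\<^sup>2"
      unfolding D_def R_def c_def using assms(1) by (rule norm_integral_minus_right_riemann_sum_le)
    moreover have "norm E \<le> C * d * d"
    proof -
      have "norm E \<le> C * d * (s - c)"
        unfolding E_def using s
        by (intro norm_integral_minus_const_le continuous norm_diff_le) (auto simp: c_def)
      also have "\<dots> \<le> C * d * d"
        using s assms(1) lipschitz_constant_nonneg by (intro mult_left_mono) (auto simp: c_def)
      finally show ?thesis .
    qed
    moreover have "norm (f s - f c) \<le> C * d"
      using s by (intro norm_diff_le) (auto simp: c_def)
    ultimately show ?thesis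
      using norm_right_riemann_sum_le[OF assms(1), of a p] bounded[of s] assms(1)
        lipschitz_constant_nonneg bound_nonneg
      by (intro add_mono mult_mono mult_left_mono) (simp_all add: R_def)
  qed
  also have "\<dots> = (4 * real p + 2) * d\<^sup>2 * B * C"
    by (simp add: power2_eq_square algebra_simps)
  finally show ?thesis
    by (simp add: R_def c_def)
qed

theorem norm_magnus2_minus_magnus2_riemann_le:
  assumes "d \<ge> 0"
  shows "norm (magnus2 f a (a + real N * d) - magnus2_riemann f a d N)
    \<le> real N * C * d\<^sup>2 + (real N)\<^sup>2 * d^3 * B * C"
proof -
  let ?g = "\<lambda>s. commutator (integral {a..s} f) (f s)"
  let ?c = "\<lambda>p. commutator (right_riemann_sum f a d p) (f (a + real p * d))"
  have "norm (integral {a..a + real N * d} ?g - (\<Sum>p<N. d *\<^sub>R ?c p))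
      \<le> (\<Sum>p<N. (4 * real p + 2) * d\<^sup>2 * B * C) * d"
  proof (rule norm_integral_minus_riemann_sum_le[OF assms continuous_on_magnus2_integrand])
    fix p s
    assume "s \<in> {a + real p * d..a + real p * d + d}"
    then show "norm (?g s - ?c p) \<le> (4 * real p + 2) * d\<^sup>2 * B * C"
      by (rule norm_magnus2_integrand_minus_le[OF assms])
  qed
  also have "\<dots> = 2 * (real N)\<^sup>2 * d^3 * B * C"
  proof -
    have "(\<Sum>p<N. (4 * real p + 2) * d\<^sup>2 * B * C) = (\<Sum>p<N. 4 * real p + 2) * (d\<^sup>2 * B * C)"
      by (simp add: sum_distrib_right mult.assoc)
    also have "(\<Sum>p<N. 4 * real p + 2) = 2 * (real N)\<^sup>2"
      by (induction N) (simp_all add: power2_eq_square algebra_simps)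
    finally show ?thesis
      by (simp add: power2_eq_square power3_eq_cube)
  qed
  finally have "norm (integral {a..a + real N * d} ?g - (\<Sum>p<N. d *\<^sub>R ?c p))
      \<le> 2 * (real N)\<^sup>2 * d^3 * B * C" .
  moreover have "norm (integral {a..a + real N * d} f - left_riemann_sum f a d N) \<le> real N * C * d\<^sup>2"
    using assms by (rule norm_integral_minus_left_riemann_sum_le)
  moreover have "magnus2 f a (a + real N * d) - magnus2_riemann f a d N
      = (integral {a..a + real N * d} f - left_riemann_sum f a d N)
        - (1/2) *\<^sub>R (integral {a..a + real N * d} ?g - (\<Sum>p<N. d *\<^sub>R ?c p))"
    by (simp add: magnus2_def magnus2_riemann_def algebra_simps)
  ultimately show ?thesis
    using norm_triangle_ineq4[of "integral {a..a + real N * d} f - left_riemann_sum f a d N"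
        "(1/2) *\<^sub>R (integral {a..a + real N * d} ?g - (\<Sum>p<N. d *\<^sub>R ?c p))"]
    by simp
qed

end

lemma bounded_lipschitz_path_conj_path:
  assumes "\<And>s. norm (exp (s *\<^sub>R a)) \<le> 1"
  shows "bounded_lipschitz_path (conj_path a b) (norm (commutator a b)) (norm b)"
proof
  show "norm (conj_path a b s - conj_path a b t) \<le> norm (commutator a b) * \<bar>s - t\<bar>" for s t
    by (rule norm_conj_path_diff_le[OF assms])
  show "norm (conj_path a b t) \<le> norm b" for t
    by (rule norm_conj_path_le[OF assms])
qed

section \<open>The Magnus exponents of the interaction picture\<close>

lemma skew_hermitian_magnus2:
  "(\<And>t. skew_hermitian (f t)) \<Longrightarrow> skew_hermitian (magnus2 f a b)"
  unfolding magnus2_def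
  by (intro skew_hermitian_diff skew_hermitian_scaleR skew_hermitian_integral
      skew_hermitian_commutator)

lemma skew_hermitian_magnus2_riemann:
  "(\<And>t. skew_hermitian (f t)) \<Longrightarrow> skew_hermitian (magnus2_riemann f a d N)"
  unfolding magnus2_riemann_def left_riemann_sum_def right_riemann_sum_def
  by (intro skew_hermitian_diff skew_hermitian_scaleR skew_hermitian_sum skew_hermitian_commutator)

lemma cscale_matrix_mult_left: "cscale c X ** Y = cscale c (X ** Y)"
  by (simp add: vec_eq_iff matrix_matrix_mult_def cscale_def sum_distrib_left mult.assoc)

lemma cscale_matrix_mult_right: "X ** cscale c Y = cscale c (X ** Y)"
  by (simp add: vec_eq_iff matrix_matrix_mult_def cscale_def sum_distrib_left mult.left_commute)

lemma cscale_cscale: "cscale c (cscale c' X) = cscale (c * c') X"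
  by (simp add: vec_eq_iff cscale_def mult.assoc)

lemma cscale_1: "cscale 1 X = X"
  by (simp add: vec_eq_iff cscale_def)

lemma uminus_cscale: "- cscale c X = cscale (- c) X"
  by (simp add: vec_eq_iff cscale_def)

lemma cscale_minus_1: "cscale (- 1) X = - X"
  by (simp add: vec_eq_iff cscale_def)

lemma scaleR_cscale: "r *\<^sub>R cscale c X = cscale (c * of_real r) X"
  by (simp add: vec_eq_iff cscale_def scaleR_conv_of_real[where 'a = complex] mult_ac)

lemma cscale_scaleR: "cscale c (r *\<^sub>R X) = r *\<^sub>R cscale c X"
  by (simp add: vec_eq_iff cscale_def)

lemma cscale_diff: "cscale c (X - Y) = cscale c X - cscale c Y"
  by (simp add: vec_eq_iff cscale_def right_diff_distrib)

lemma cscale_sum: "cscale c (sum f S) = (\<Sum>x\<in>S. cscale c (f x))"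
  by (simp add: vec_eq_iff cscale_def sum_distrib_left)

lemma comm_cscale: "comm (cscale c X) (cscale c' Y) = cscale (c * c') (comm X Y)"
  by (simp add: comm_def cscale_matrix_mult_left cscale_matrix_mult_right cscale_cscale
      cscale_diff mult.commute)

lemma comm_mat_of: "comm (mat_of x) (mat_of y) = mat_of (commutator x y)"
  by (simp add: comm_def commutator_def)

definition Afun_opmat :: "'n::finite cmat \<Rightarrow> 'n cmat \<Rightarrow> real \<Rightarrow> 'n opmat" where
  "Afun_opmat A B = conj_path (to_opmat (cscale \<i> A)) (to_opmat (cscale (- \<i>) B))"

lemma mat_of_Afun_opmat: "mat_of (Afun_opmat A B t) = Afun A B t"
  by (simp add: Afun_opmat_def Afun_def Hfun_def conj_path_def scaleR_cscale uminus_cscale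
      cscale_matrix_mult_left cscale_matrix_mult_right flip: mexp_mat_of)

lemma Omega2_eq_magnus2: "Omega2 A B tj h = mat_of (magnus2 (Afun_opmat A B) tj (tj + h))"
proof -
  have continuous: "continuous_on S (Afun_opmat A B)" for S
    unfolding Afun_opmat_def by (rule continuous_on_conj_path)
  have integrable: "Afun_opmat A B integrable_on {a..b}" for a b
    by (intro integrable_continuous_interval continuous)
  have "(\<lambda>s. commutator (integral {tj..s} (Afun_opmat A B)) (Afun_opmat A B s)) integrable_on {tj..tj + h}"
    unfolding commutator_def
    by (intro integrable_continuous_interval continuous_intros continuous
        indefinite_integral_continuous_1 integrable)
  moreover have "Afun A B = (\<lambda>t. mat_of (Afun_opmat A B t))"
    by (simp add: fun_eq_iff mat_of_Afun_opmat)
  ultimately show ?thesis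
    by (simp add: Omega2_def magnus2_def integral_mat_of integrable comm_mat_of)
qed

lemma U2tilde_eq_magnus2_riemann:
  "U2tilde A B tj h M = mexp (mat_of (magnus2_riemann (Afun_opmat A B) tj (h / real M) M))"
proof -
  let ?f = "Afun_opmat A B"
  define d where "d = h / real M"
  have nodes: "tj + real p * h / real M = tj + real p * d" for p
    by (simp add: d_def)
  have H: "Hfun A B t = cscale \<i> (mat_of (?f t))" for t
    by (simp add: Afun_def cscale_cscale cscale_1 mat_of_Afun_opmat)
  have left: "cscale (- \<i>) (\<Sum>p<M. d *\<^sub>R cscale \<i> (mat_of (?f (tj + real p * d))))
      = mat_of (left_riemann_sum ?f tj d M)"
    by (simp add: left_riemann_sum_def cscale_sum cscale_scaleR cscale_cscale cscale_1)
  have right: "comm (\<Sum>q\<in>{1..p}. d *\<^sub>R cscale \<i> (mat_of (?f (tj + real q * d))))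
      (cscale \<i> (mat_of (?f (tj + real p * d))))
    = - mat_of (commutator (right_riemann_sum ?f tj d p) (?f (tj + real p * d)))" for p
  proof -
    have "(\<Sum>q\<in>{1..p}. d *\<^sub>R cscale \<i> (mat_of (?f (tj + real q * d))))
        = cscale \<i> (mat_of (right_riemann_sum ?f tj d p))"
      by (simp add: right_riemann_sum_def cscale_sum cscale_scaleR)
    then show ?thesis
      by (simp add: comm_cscale comm_mat_of cscale_minus_1)
  qed
  show ?thesis
    unfolding U2tilde_def nodes H d_def[symmetric] left right
    by (simp add: magnus2_riemann_def scaleR_sum_right sum_negf)
qed

lemma norm_U2_minus_U2tilde_le:
  assumes "hermitian A" and "hermitian B" and "h \<ge> 0" and "M > 0"
  shows "specnorm (U2 A B tj h - U2tilde A B tj h M)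
    \<le> h^2 / real M * specnorm (comm A B) + h^3 / real M * specnorm B * specnorm (comm A B)"
proof -
  define a where "a = to_opmat (cscale \<i> A)"
  define b where "b = to_opmat (cscale (- \<i>) B)"
  define d where "d = h / real M"
  have path: "Afun_opmat A B = conj_path a b"
    by (simp add: Afun_opmat_def a_def b_def)
  have a: "skew_hermitian a" and b: "skew_hermitian b"
    using assms(1,2) by (simp_all add: a_def b_def skew_hermitian_imaginary_times_hermitian)
  then have skew: "skew_hermitian (conj_path a b t)" for t
    by (rule skew_hermitian_conj_path)
  interpret bounded_lipschitz_path "conj_path a b" "norm (commutator a b)" "norm b"
    using norm_exp_skew_hermitian_le[OF a] by (rule bounded_lipschitz_path_conj_path)
  have commutator: "norm (commutator a b) = specnorm (comm A B)"
    by (simp add: a_def b_def comm_cscale cscale_1 flip: specnorm_mat_of comm_mat_of)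
  have "specnorm (U2 A B tj h - U2tilde A B tj h M)
      = norm (exp (magnus2 (conj_path a b) tj (tj + real M * d))
          - exp (magnus2_riemann (conj_path a b) tj d M))"
    using assms(4)
    by (simp add: U2_def Omega2_eq_magnus2 U2tilde_eq_magnus2_riemann mexp_mat_of path d_def
        flip: specnorm_mat_of)
  also have "\<dots> \<le> norm (magnus2 (conj_path a b) tj (tj + real M * d)
      - magnus2_riemann (conj_path a b) tj d M)"
    using skew by (intro norm_exp_diff_le norm_exp_skew_hermitian_le skew_hermitian_magnus2
        skew_hermitian_magnus2_riemann)
  also have "\<dots> \<le> real M * norm (commutator a b) * d\<^sup>2
      + (real M)\<^sup>2 * d^3 * norm b * norm (commutator a b)"
    using assms(3) by (intro norm_magnus2_minus_magnus2_riemann_le) (simp add: d_def)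
  also have "\<dots> = h^2 / real M * specnorm (comm A B) + h^3 / real M * norm b * specnorm (comm A B)"
    using assms(4) by (simp add: commutator d_def power2_eq_square power3_eq_cube field_simps)
  also have "\<dots> \<le> h^2 / real M * specnorm (comm A B) + h^3 / real M * specnorm B * specnorm (comm A B)"
    using specnorm_cscale_le[of "- \<i>" B] specnorm_nonneg[of "comm A B"] assms(3)
    by (intro add_left_mono mult_right_mono mult_left_mono) (simp_all add: b_def flip: specnorm_mat_of)
  finally show ?thesis .
qed

theorem corollary3:
  fixes A B :: "complex^'n::finite^'n"
    and tj h :: real and M :: nat
  assumes "hermitian A" and "hermitian B"
    and "h > 0" and "M > 0"
  shows "specnorm (U2 A B tj h - U2tilde A B tj h M)
         \<le> h^2 / real M * specnorm (comm A B)
           + 3 * h^3 / real M * specnorm B * specnorm (comm A B)"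
proof -
  have "h^3 / real M * specnorm B * specnorm (comm A B)
      \<le> 3 * h^3 / real M * specnorm B * specnorm (comm A B)"
    using assms(3) specnorm_nonneg[of B] specnorm_nonneg[of "comm A B"]
    by (intro mult_right_mono) (simp_all add: divide_right_mono)
  then show ?thesis
    using norm_U2_minus_U2tilde_le[OF assms(1,2) less_imp_le[OF assms(3)] assms(4), of tj] by linarith
qed

end
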